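(* Let ${\cal H}_B,{\cal H}_C$ have dimensions $d_B\le d_C$. Let $(\varphi_i,M_i)_{i=1}^N$ consist of pure states $\ket{\varphi_i}\in{\cal H}_B\otimes{\cal H}_C$ with $E(\varphi_i)\ge\log d_B-\delta$ for all $i$ (some $\delta\ge0$), and a POVM $(M_i)_{i=1}^N$ all of whose elements are PPT, such that $\tr(\varphi_iM_i)\ge1-\epsilon$ for all $i$. If $\epsilon+\sqrt2\,\delta^{1/4}<1$, then $$N\le\bigl(1-\epsilon-\sqrt2\,\delta^{1/4}\bigr)^{-1}d_C.$$
   Context: Logarithms are base 2. $E(\varphi)=S(\tr_C\varphi)$ for pure $\varphi$. An operator $M$ on ${\cal H}_B\otimes{\cal H}_C$ is PPT if its partial transpose $M^\Gamma$ (with respect to a fixed product basis: $\ket{ij}\bra{kl}\mapsto\ket{il}\bra{kj}$) is positive semidefinite. *)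

theory Defs
  imports "Jordan_Normal_Form.Char_Poly" Complex_Main
begin

text \<open>H_B = C^dB, H_C = C^dC, and H_B (x) H_C = C^(dB*dC) with the
fixed product basis: the basis vector |j k> (j < dB, k < dC) has index j*dC + k.\<close>

definition prod_idx :: "nat \<Rightarrow> nat \<Rightarrow> nat \<Rightarrow> nat" where
  "prod_idx dC j k = j * dC + k"

definition unit_vec_state :: "nat \<Rightarrow> complex vec \<Rightarrow> bool" where
  "unit_vec_state n v \<longleftrightarrow> v \<in> carrier_vec n \<and> (\<Sum>k<n. (cmod (v $ k))^2) = 1"

definition proj :: "complex vec \<Rightarrow> complex mat" where
  "proj v = mat (dim_vec v) (dim_vec v) (\<lambda>(a,b). v $ a * cnj (v $ b))"

definition mtrace :: "complex mat \<Rightarrow> complex" where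
  "mtrace A = (\<Sum>a<dim_row A. A $$ (a,a))"

definition psd :: "nat \<Rightarrow> complex mat \<Rightarrow> bool" where
  "psd n A \<longleftrightarrow> A \<in> carrier_mat n n \<and>
     (\<forall>x \<in> carrier_vec n. let q = (\<Sum>a<n. \<Sum>b<n. cnj (x $ a) * A $$ (a,b) * x $ b)
                          in Im q = 0 \<and> Re q \<ge> 0)"

definition ptrace_C :: "nat \<Rightarrow> nat \<Rightarrow> complex mat \<Rightarrow> complex mat" where
  "ptrace_C dB dC M = mat dB dB (\<lambda>(j,j'). \<Sum>k<dC. M $$ (prod_idx dC j k, prod_idx dC j' k))"

text \<open>Partial transpose: |ij><kl| maps to |il><kj| (transpose on the C factor).\<close>
definition ptranspose :: "nat \<Rightarrow> nat \<Rightarrow> complex mat \<Rightarrow> complex mat" where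
  "ptranspose dB dC M = mat (dB*dC) (dB*dC)
     (\<lambda>(a,b). M $$ (prod_idx dC (a div dC) (b mod dC), prod_idx dC (b div dC) (a mod dC)))"

definition PPT :: "nat \<Rightarrow> nat \<Rightarrow> complex mat \<Rightarrow> bool" where
  "PPT dB dC M \<longleftrightarrow> psd (dB*dC) (ptranspose dB dC M)"

definition vn_entropy :: "complex mat \<Rightarrow> real" where
  "vn_entropy A = - (\<Sum>a \<in> {a. poly (char_poly A) a = 0}.
       real (order a (char_poly A)) * (if Re a = 0 then 0 else Re a * log 2 (Re a)))"

definition ent :: "nat \<Rightarrow> nat \<Rightarrow> complex vec \<Rightarrow> real" where
  "ent dB dC v = vn_entropy (ptrace_C dB dC (proj v))"

definition POVM :: "nat \<Rightarrow> nat \<Rightarrow> (nat \<Rightarrow> complex mat) \<Rightarrow> bool" where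
  "POVM n N M \<longleftrightarrow> (\<forall>i<N. psd n (M i)) \<and>
     (\<forall>a<n. \<forall>b<n. (\<Sum>i<N. M i $$ (a,b)) = (if a = b then 1 else 0))"

end

theory Submission
  imports Defs
begin

text \<open>
  Write a pure state \<open>\<phi>\<close> of \<open>\<complex>\<^sup>d\<^sup>B \<otimes> \<complex>\<^sup>d\<^sup>C\<close> as a \<open>dB \<times> dC\<close> array \<open>X\<close>, so that its reduced
  state is the Gram matrix \<open>X X\<^sup>*\<close>, with eigenvalues \<open>\<lambda>\<^sub>m\<close> whose entropy is \<open>E(\<phi>)\<close>. Shrinking \<open>X\<close>
  along the eigenvectors with \<open>\<lambda>\<^sub>m > 1/dB\<close> down to weight \<open>1/dB\<close> splits \<open>X = X\<^sub>1 + X\<^sub>2\<close>, where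
  the reduced state of \<open>X\<^sub>1\<close> has operator norm at most \<open>1/dB\<close>, and the weight \<open>q = |X\<^sub>2|\<^sup>2\<close> is at
  most \<open>\<delta> ln 2\<close> by the elementary inequality \<open>(1 - sqrt (c/x))\<^sup>2 x \<le> x ln x - x ln c - x + c\<close>
  summed against the entropy defect \<open>log dB - E(\<phi>) \<le> \<delta>\<close>.

  For a PPT operator \<open>0 \<le> M \<le> 1\<close>, partial transposition turns \<open>\<langle>Y|M|Y\<rangle>\<close> into a pairing of
  \<open>tr\<^sub>C M\<close> with the reduced state of \<open>Y\<close>, so \<open>\<langle>X\<^sub>1|M|X\<^sub>1\<rangle> \<le> tr M / dB\<close>. Together with
  \<open>\<langle>X|M|X\<rangle> \<le> (1 + t) \<langle>X\<^sub>1|M|X\<^sub>1\<rangle> + (1 + 1/t) \<langle>X\<^sub>2|M|X\<^sub>2\<rangle>\<close> at \<open>t = sqrt q\<close> this gives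
  \<open>tr (\<phi> M) \<le> tr M / dB + 2 sqrt q + q - q sqrt q \<le> tr M / dB + sqrt 2 \<delta>\<^sup>1\<^sup>/\<^sup>4\<close>. Summing over the
  POVM, whose traces add up to \<open>dB dC\<close>, yields \<open>N (1 - \<epsilon> - sqrt 2 \<delta>\<^sup>1\<^sup>/\<^sup>4) \<le> dC\<close>.
\<close>

lemma sum_delta_mult [simp]:
  fixes f :: "nat \<Rightarrow> 'a::semiring_1"
  assumes "a < n"
  shows "(\<Sum>b<n. f b * (if a = b then 1 else 0)) = f a"
    and "(\<Sum>b<n. f b * (if b = a then 1 else 0)) = f a"
    and "(\<Sum>b<n. (if a = b then 1 else 0) * f b) = f a"
    and "(\<Sum>b<n. (if b = a then 1 else 0) * f b) = f a"
  using assms by (simp_all add: if_distrib[of "\<lambda>x. x * _"] if_distrib[of "\<lambda>x. _ * x"] cong: if_cong)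

lemma sum_rotate3:
  "(\<Sum>a\<in>A. \<Sum>b\<in>B. \<Sum>c\<in>C. f a b c) = (\<Sum>b\<in>B. \<Sum>c\<in>C. \<Sum>a\<in>A. (f a b c :: 'a::comm_monoid_add))"
  by (subst sum.swap) (simp only: sum.swap[of _ A])

lemma sum_rotate4:
  "(\<Sum>a\<in>A. \<Sum>b\<in>B. \<Sum>c\<in>C. \<Sum>d\<in>D. f a b c d)
     = (\<Sum>c\<in>C. \<Sum>d\<in>D. \<Sum>a\<in>A. \<Sum>b\<in>B. (f a b c d :: 'a::comm_monoid_add))"
proof -
  have "(\<Sum>a\<in>A. \<Sum>b\<in>B. \<Sum>c\<in>C. \<Sum>d\<in>D. f a b c d) = (\<Sum>a\<in>A. \<Sum>c\<in>C. \<Sum>d\<in>D. \<Sum>b\<in>B. f a b c d)"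
    by (rule sum.cong[OF refl], rule sum_rotate3)
  also have "\<dots> = (\<Sum>c\<in>C. \<Sum>d\<in>D. \<Sum>a\<in>A. \<Sum>b\<in>B. f a b c d)"
    by (rule sum_rotate3)
  finally show ?thesis .
qed

lemma sum_mult_sum_mult:
  fixes f g :: "_ \<Rightarrow> 'a::comm_semiring_1"
  shows "(\<Sum>i\<in>I. \<Sum>j\<in>J. f i * c * g j) = (\<Sum>i\<in>I. f i) * c * (\<Sum>j\<in>J. g j)"
proof -
  have "(\<Sum>i\<in>I. f i) * c * (\<Sum>j\<in>J. g j) = (\<Sum>i\<in>I. f i * c) * (\<Sum>j\<in>J. g j)"
    by (simp only: sum_distrib_right)
  then show ?thesis
    by (simp only: sum_product)
qed

lemma sum_lessThan_mult:
  fixes f :: "nat \<Rightarrow> 'a::comm_monoid_add"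
  shows "(\<Sum>a<d * D. f a) = (\<Sum>j<d. \<Sum>k<D. f (j * D + k))"
proof -
  have "(\<Sum>k<D. f (j * D + k)) = sum f {j * D..<j * D + D}" for j
    using sum.shift_bounds_nat_ivl[of f 0 "j * D" D] by (simp add: atLeast0LessThan add.commute)
  then show ?thesis by (simp add: sum.nat_group)
qed

lemma index_mult_add_less: "(j::nat) < d \<Longrightarrow> k < D \<Longrightarrow> j * D + k < d * D"
  by (simp add: less_le_trans[OF _ mult_le_mono1[of "Suc j" d D]])

section \<open>Spectral theorem for Hermitian matrices\<close>

text \<open>An \<open>n \<times> n\<close> matrix is a function on indices below \<open>n\<close>.\<close>

definition hermitian :: "nat \<Rightarrow> (nat \<Rightarrow> nat \<Rightarrow> complex) \<Rightarrow> bool" where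
  "hermitian n A \<longleftrightarrow> (\<forall>a<n. \<forall>b<n. A b a = cnj (A a b))"

definition orthonormal :: "nat \<Rightarrow> (nat \<Rightarrow> nat \<Rightarrow> complex) \<Rightarrow> bool" where
  "orthonormal n u \<longleftrightarrow>
     (\<forall>k<n. \<forall>l<n. (\<Sum>a<n. cnj (u k a) * u l a) = (if k = l then 1 else 0))"

definition eigendecomp ::
    "nat \<Rightarrow> (nat \<Rightarrow> nat \<Rightarrow> complex) \<Rightarrow> (nat \<Rightarrow> nat \<Rightarrow> complex) \<Rightarrow> (nat \<Rightarrow> real) \<Rightarrow> bool" where
  "eigendecomp n A u lam \<longleftrightarrow>
     (\<forall>a<n. \<forall>b<n. A a b = (\<Sum>k<n. of_real (lam k) * u k a * cnj (u k b)))"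

lemma hermitian_cnj: "hermitian n A \<Longrightarrow> a < n \<Longrightarrow> b < n \<Longrightarrow> cnj (A a b) = A b a"
  unfolding hermitian_def by (metis complex_cnj_cnj)

text \<open>Orthonormal rows are complete, because a left inverse of a square matrix is a right inverse.\<close>

lemma orthonormal_unitary:
  assumes "orthonormal n u"
  defines "U \<equiv> mat n n (\<lambda>(a, k). u k a)" and "V \<equiv> mat n n (\<lambda>(k, a). cnj (u k a))"
  shows "V * U = 1\<^sub>m n" and "U * V = 1\<^sub>m n"
proof -
  show VU: "V * U = 1\<^sub>m n"
    using assms(1) by (intro eq_matI) (auto simp: U_def V_def orthonormal_def scalar_prod_def atLeast0LessThan)
  show "U * V = 1\<^sub>m n"
    by (rule mat_mult_left_right_inverse[OF _ _ VU]) (simp_all add: U_def V_def)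
qed

lemma orthonormal_complete:
  assumes "orthonormal n u" and "a < n" and "b < n"
  shows "(\<Sum>k<n. u k a * cnj (u k b)) = (if a = b then 1 else 0)"
proof -
  have "(mat n n (\<lambda>(a, k). u k a) * mat n n (\<lambda>(k, a). cnj (u k a))) $$ (a, b) = 1\<^sub>m n $$ (a, b)"
    using orthonormal_unitary(2)[OF assms(1)] by simp
  with assms(2,3) show ?thesis by (simp add: scalar_prod_def atLeast0LessThan)
qed

lemma eigenvector_exists:
  fixes A :: "nat \<Rightarrow> nat \<Rightarrow> complex"
  assumes "0 < n"
  obtains x e where "\<exists>a<n. x a \<noteq> 0" and "\<And>a. a < n \<Longrightarrow> (\<Sum>b<n. A a b * x b) = e * x a"
proof -
  let ?A = "mat n n (\<lambda>(a, b). A a b)"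
  obtain es where es: "char_poly ?A = (\<Prod>a\<leftarrow>es. [:- a, 1:])" "length es = n"
    using char_poly_factorized[of ?A n] by auto
  then obtain e es' where "es = e # es'" using assms by (cases es) auto
  with es have "eigenvalue ?A e"
    by (simp add: eigenvalue_root_char_poly[of ?A n])
  then obtain v where "eigenvector ?A v e" unfolding eigenvalue_def by blast
  then have v: "v \<in> carrier_vec n" "v \<noteq> 0\<^sub>v n" "?A *\<^sub>v v = e \<cdot>\<^sub>v v"
    unfolding eigenvector_def by auto
  show thesis
  proof
    show "\<exists>a<n. v $ a \<noteq> 0"
      using v(1,2) by (metis carrier_vecD eq_vecI index_zero_vec)
    show "(\<Sum>b<n. A a b * v $ b) = e * v $ a" if "a < n" for a
      using arg_cong[OF v(3), of "\<lambda>w. w $ a"] that v(1)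
      by (simp add: scalar_prod_def atLeast0LessThan)
  qed
qed

lemma cnj_sgn_mult_self: "cnj (sgn z) * z = of_real (cmod z)"
proof (cases "z = 0")
  case False
  have "cnj (sgn z) * z = z * cnj z / of_real (cmod z)"
    by (simp add: sgn_eq mult.commute)
  also have "z * cnj z = of_real (cmod z) * of_real (cmod z)"
    by (metis complex_norm_square of_real_mult power2_eq_square)
  finally show ?thesis using False by simp
qed simp

lemma unit_eigenvector_exists:
  fixes A :: "nat \<Rightarrow> nat \<Rightarrow> complex"
  assumes "0 < n"
  obtains u r e where "(\<Sum>a<n. cnj (u a) * u a) = 1" and "u 0 = of_real r"
    and "\<And>a. a < n \<Longrightarrow> (\<Sum>b<n. A a b * u b) = e * u a"
proof -
  obtain x e where x: "\<exists>a<n. x a \<noteq> 0" and eig: "\<And>a. a < n \<Longrightarrow> (\<Sum>b<n. A a b * x b) = e * x a"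
    using eigenvector_exists[OF assms] by blast
  define s where "s = (\<Sum>a<n. (cmod (x a))\<^sup>2)"
  have "0 < s"
    using x unfolding s_def by (auto intro!: sum_pos2)
  \<comment> \<open>the phase factor makes the first entry real\<close>
  define c where "c = (if x 0 = 0 then 1 else cnj (sgn (x 0))) / of_real (sqrt s)"
  have "cmod c = 1 / sqrt s"
    using \<open>0 < s\<close> by (simp add: c_def norm_divide norm_sgn)
  have "cnj c * c = of_real ((cmod c)\<^sup>2)"
    by (subst complex_norm_square) (rule mult.commute)
  also have "(cmod c)\<^sup>2 = 1 / s"
    using \<open>cmod c = 1 / sqrt s\<close> \<open>0 < s\<close> by (simp add: power_divide)
  finally have cc: "cnj c * c = of_real (1 / s)" .
  show thesis
  proof
    have "(\<Sum>a<n. cnj (c * x a) * (c * x a)) = cnj c * c * (\<Sum>a<n. cnj (x a) * x a)"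
      by (simp add: sum_distrib_left mult_ac)
    also have "(\<Sum>a<n. cnj (x a) * x a) = of_real s"
      unfolding s_def of_real_sum by (intro sum.cong refl) (subst complex_norm_square, rule mult.commute)
    finally show "(\<Sum>a<n. cnj (c * x a) * (c * x a)) = 1"
      using \<open>0 < s\<close> by (simp add: cc)
    show "c * x 0 = of_real (cmod (x 0) / sqrt s)"
      by (cases "x 0 = 0") (simp_all add: c_def cnj_sgn_mult_self)
    show "(\<Sum>b<n. A a b * (c * x b)) = e * (c * x a)" if "a < n" for a
    proof -
      have "(\<Sum>b<n. A a b * (c * x b)) = c * (\<Sum>b<n. A a b * x b)"
        by (simp add: sum_distrib_left mult_ac)
      then show ?thesis using eig[OF that] by simp
    qed
  qed
qed

lemma rank_one_update_mult_self:
  fixes w :: "nat \<Rightarrow> complex" and c s :: real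
  assumes norm_w: "(\<Sum>b<n. cnj (w b) * w b) = of_real s" and "c * c * s = 2 * c"
    and "a < n" and "d < n"
  shows "(\<Sum>b<n. ((if a = b then 1 else 0) - of_real c * w a * cnj (w b))
            * ((if b = d then 1 else 0) - of_real c * w b * cnj (w d))) = (if a = d then 1 else 0)"
proof -
  let ?C = "complex_of_real c"
  have "?C * ?C * of_real s = 2 * ?C"
    using arg_cong[OF \<open>c * c * s = 2 * c\<close>, of complex_of_real] by simp
  have "(\<Sum>b<n. ((if a = b then 1 else 0) - ?C * w a * cnj (w b))
            * ((if b = d then 1 else 0) - ?C * w b * cnj (w d)))
      = (\<Sum>b<n. (if a = b then 1 else 0) * (if b = d then 1 else 0)
          - (if a = b then 1 else 0) * (?C * w b * cnj (w d)) - (?C * w a * cnj (w b)) * (if b = d then 1 else 0)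
          + ?C * ?C * w a * cnj (w d) * (cnj (w b) * w b))"
    by (intro sum.cong refl) (simp add: algebra_simps)
  also have "\<dots> = (if a = d then 1 else 0) - ?C * w a * cnj (w d) - ?C * w a * cnj (w d)
        + ?C * ?C * w a * cnj (w d) * (\<Sum>b<n. cnj (w b) * w b)"
    using assms(3,4) by (simp add: sum.distrib sum_subtractf sum_distrib_left del: mult_1 mult_zero_left)
  also have "\<dots> = (if a = d then 1 else 0) + (?C * ?C * of_real s - 2 * ?C) * (w a * cnj (w d))"
    unfolding norm_w by (simp add: algebra_simps)
  also have "\<dots> = (if a = d then 1 else 0)"
    unfolding \<open>?C * ?C * of_real s = 2 * ?C\<close> by simp
  finally show ?thesis .
qed

lemma householder_reflection:
  fixes u :: "nat \<Rightarrow> complex"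
  assumes unit: "(\<Sum>a<n. cnj (u a) * u a) = 1" and u0: "u 0 = of_real r" and "0 < n"
  obtains H where "hermitian n H"
    and "\<And>a c. a < n \<Longrightarrow> c < n \<Longrightarrow> (\<Sum>b<n. H a b * H b c) = (if a = c then 1 else 0)"
    and "\<And>a. a < n \<Longrightarrow> H a 0 = u a"
proof -
  \<comment> \<open>the reflection in the hyperplane orthogonal to \<open>w = e\<^sub>0 - u\<close>, which has \<open>|w|\<^sup>2 = 2 - 2 r\<close>\<close>
  define w where "w = (\<lambda>a. (if a = 0 then 1 else 0) - u a)"
  define c where "c = (if r = 1 then 0 else 1 / (1 - r))"
  define H where "H = (\<lambda>a b. (if a = b then 1 else 0) - of_real c * w a * cnj (w b))"
  have norm_w: "(\<Sum>b<n. cnj (w b) * w b) = of_real (2 - 2 * r)"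
  proof -
    have "(\<Sum>b<n. cnj (w b) * w b)
        = (\<Sum>b<n. (if b = 0 then 1 - cnj (u b) - u b else 0) + cnj (u b) * u b)"
      unfolding w_def by (intro sum.cong refl) (auto simp: algebra_simps)
    then show ?thesis
      using \<open>0 < n\<close> unit u0 by (simp add: sum.distrib)
  qed
  have "c * c * (2 - 2 * r) = 2 * c"
  proof (cases "r = 1")
    case False
    then have "c * (1 - r) = 1"
      by (simp add: c_def)
    have "c * c * (2 - 2 * r) = 2 * c * (c * (1 - r))"
      by (simp add: algebra_simps)
    with \<open>c * (1 - r) = 1\<close> show ?thesis
      by simp
  qed (simp add: c_def)
  have "H a 0 = u a" if "a < n" for a
  proof (cases "r = 1")
    case True
    have "complex_of_real (\<Sum>b<n. (cmod (w b))\<^sup>2) = (\<Sum>b<n. cnj (w b) * w b)"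
      unfolding of_real_sum by (intro sum.cong refl) (subst complex_norm_square, rule mult.commute)
    then have "complex_of_real (\<Sum>b<n. (cmod (w b))\<^sup>2) = 0"
      using norm_w True by simp
    then have "(\<Sum>b<n. (cmod (w b))\<^sup>2) = 0"
      by (simp only: of_real_eq_0_iff)
    then have "w a = 0"
      using that by (simp add: sum_nonneg_eq_0_iff)
    then show ?thesis
      using True by (simp add: H_def c_def w_def)
  next
    case False
    then have "of_real c * cnj (w 0) = 1"
      using u0 \<open>0 < n\<close> by (simp add: c_def w_def field_simps)
    have "H a 0 = (if a = 0 then 1 else 0) - w a * (of_real c * cnj (w 0))"
      by (simp add: H_def mult_ac)
    with \<open>of_real c * cnj (w 0) = 1\<close> show ?thesis
      by (simp add: w_def)
  qed
  moreover have "hermitian n H"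
    unfolding hermitian_def H_def by (auto simp: mult_ac)
  ultimately show thesis
    using that rank_one_update_mult_self[OF norm_w \<open>c * c * (2 - 2 * r) = 2 * c\<close>]
    unfolding H_def by blast
qed

lemma hermitian_sandwich:
  assumes "hermitian n A" and "hermitian n H"
  shows "hermitian n (\<lambda>i j. \<Sum>a<n. \<Sum>b<n. H i a * A a b * H b j)"
  unfolding hermitian_def
proof (intro allI impI)
  fix i j assume "i < n" "j < n"
  have "cnj (\<Sum>a<n. \<Sum>b<n. H i a * A a b * H b j) = (\<Sum>a<n. \<Sum>b<n. H a i * A b a * H j b)"
    unfolding cnj_sum using assms \<open>i < n\<close> \<open>j < n\<close> by (intro sum.cong refl) (simp add: hermitian_cnj)
  also have "\<dots> = (\<Sum>b<n. \<Sum>a<n. H j b * A b a * H a i)"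
    by (subst sum.swap) (simp add: mult_ac)
  finally show "(\<Sum>a<n. \<Sum>b<n. H j a * A a b * H b i) = cnj (\<Sum>a<n. \<Sum>b<n. H i a * A a b * H b j)"
    by simp
qed

lemma eigendecomp_extend:
  fixes A :: "nat \<Rightarrow> nat \<Rightarrow> complex" and e :: real
  assumes v: "orthonormal m v" and dec: "eigendecomp m (\<lambda>i j. A (Suc i) (Suc j)) v mu"
    and col: "\<And>i. i < Suc m \<Longrightarrow> A i 0 = (if i = 0 then of_real e else 0)"
    and row: "\<And>j. j < Suc m \<Longrightarrow> A 0 j = (if j = 0 then of_real e else 0)"
  defines "Y \<equiv> \<lambda>k i. if k = 0 then (if i = 0 then 1 else 0) else if i = 0 then 0 else v (k - 1) (i - 1)"
    and "lam \<equiv> \<lambda>k. if k = 0 then e else mu (k - 1)"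
  shows "orthonormal (Suc m) Y \<and> eigendecomp (Suc m) A Y lam"
proof
  show "orthonormal (Suc m) Y"
    unfolding orthonormal_def
  proof (intro allI impI)
    fix k l assume "k < Suc m" "l < Suc m"
    then show "(\<Sum>a<Suc m. cnj (Y k a) * Y l a) = (if k = l then 1 else 0)"
      using v unfolding orthonormal_def sum.lessThan_Suc_shift
      by (cases k; cases l) (auto simp: Y_def)
  qed
  show "eigendecomp (Suc m) A Y lam"
    unfolding eigendecomp_def
  proof (intro allI impI)
    fix i j assume i: "i < Suc m" and j: "j < Suc m"
    have split: "(\<Sum>k<Suc m. of_real (lam k) * Y k i * cnj (Y k j)) = of_real e * Y 0 i * cnj (Y 0 j)
        + (\<Sum>k<m. of_real (mu k) * Y (Suc k) i * cnj (Y (Suc k) j))"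
      unfolding sum.lessThan_Suc_shift by (simp add: lam_def)
    show "A i j = (\<Sum>k<Suc m. of_real (lam k) * Y k i * cnj (Y k j))"
      unfolding split
    proof (cases i; cases j)
      fix i' j' assume "i = Suc i'" "j = Suc j'"
      then show "A i j = of_real e * Y 0 i * cnj (Y 0 j)
          + (\<Sum>k<m. of_real (mu k) * Y (Suc k) i * cnj (Y (Suc k) j))"
        using dec i j unfolding eigendecomp_def by (simp add: Y_def)
    qed (use col row i j in \<open>simp_all add: Y_def\<close>)
  qed
qed

lemma orthonormal_conjugate:
  assumes H: "hermitian n H"
    and inv: "\<And>a c. a < n \<Longrightarrow> c < n \<Longrightarrow> (\<Sum>b<n. H a b * H b c) = (if a = c then 1 else 0)"
    and Y: "orthonormal n Y"
  shows "orthonormal n (\<lambda>k a. \<Sum>i<n. H a i * Y k i)"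
  unfolding orthonormal_def
proof (intro allI impI)
  fix k l assume "k < n" "l < n"
  have "(\<Sum>a<n. cnj (\<Sum>i<n. H a i * Y k i) * (\<Sum>j<n. H a j * Y l j))
      = (\<Sum>a<n. \<Sum>i<n. \<Sum>j<n. cnj (Y k i) * Y l j * (H i a * H a j))"
    unfolding cnj_sum sum_product by (intro sum.cong refl) (simp add: hermitian_cnj[OF H] mult_ac)
  also have "\<dots> = (\<Sum>i<n. \<Sum>j<n. cnj (Y k i) * Y l j * (\<Sum>a<n. H i a * H a j))"
    by (subst sum_rotate3) (simp only: sum_distrib_left)
  also have "\<dots> = (\<Sum>i<n. cnj (Y k i) * Y l i)"
    by (intro sum.cong refl) (simp add: inv)
  also have "\<dots> = (if k = l then 1 else 0)"
    using Y \<open>k < n\<close> \<open>l < n\<close> unfolding orthonormal_def by auto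
  finally show "(\<Sum>a<n. cnj (\<Sum>i<n. H a i * Y k i) * (\<Sum>j<n. H a j * Y l j)) = (if k = l then 1 else 0)" .
qed

lemma eigendecomp_conjugate:
  assumes H: "hermitian n H"
    and inv: "\<And>a c. a < n \<Longrightarrow> c < n \<Longrightarrow> (\<Sum>b<n. H a b * H b c) = (if a = c then 1 else 0)"
    and dec: "eigendecomp n (\<lambda>i j. \<Sum>a<n. \<Sum>b<n. H i a * A a b * H b j) Y lam"
  shows "eigendecomp n A (\<lambda>k a. \<Sum>i<n. H a i * Y k i) lam"
  unfolding eigendecomp_def
proof (intro allI impI)
  fix a b assume a: "a < n" and b: "b < n"
  define U where "U = (\<lambda>k a. \<Sum>i<n. H a i * Y k i)"
  have "of_real (lam k) * U k a * cnj (U k b)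
      = (\<Sum>i<n. \<Sum>j<n. H a i * H j b * (of_real (lam k) * Y k i * cnj (Y k j)))" for k
  proof -
    have "of_real (lam k) * U k a * cnj (U k b)
        = of_real (lam k) * ((\<Sum>i<n. H a i * Y k i) * (\<Sum>j<n. cnj (H b j * Y k j)))"
      by (simp add: U_def cnj_sum mult.assoc)
    also have "\<dots> = (\<Sum>i<n. \<Sum>j<n. of_real (lam k) * ((H a i * Y k i) * cnj (H b j * Y k j)))"
      by (subst sum_product) (simp only: sum_distrib_left)
    also have "\<dots> = (\<Sum>i<n. \<Sum>j<n. H a i * H j b * (of_real (lam k) * Y k i * cnj (Y k j)))"
      using b by (intro sum.cong refl) (simp add: hermitian_cnj[OF H] mult_ac)
    finally show ?thesis .
  qed
  then have "(\<Sum>k<n. of_real (lam k) * U k a * cnj (U k b))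
      = (\<Sum>k<n. \<Sum>i<n. \<Sum>j<n. H a i * H j b * (of_real (lam k) * Y k i * cnj (Y k j)))"
    by simp
  also have "\<dots> = (\<Sum>i<n. \<Sum>j<n. H a i * H j b * (\<Sum>k<n. of_real (lam k) * Y k i * cnj (Y k j)))"
    by (subst sum_rotate3) (simp only: sum_distrib_left)
  also have "\<dots> = (\<Sum>i<n. \<Sum>j<n. H a i * H j b * (\<Sum>c<n. \<Sum>d<n. H i c * A c d * H d j))"
    using dec unfolding eigendecomp_def by (intro sum.cong refl) simp
  also have "\<dots> = (\<Sum>i<n. \<Sum>j<n. \<Sum>c<n. \<Sum>d<n. (H a i * H i c) * A c d * (H d j * H j b))"
    by (intro sum.cong refl) (simp add: sum_distrib_left mult_ac)
  also have "\<dots> = (\<Sum>c<n. \<Sum>d<n. (\<Sum>i<n. H a i * H i c) * A c d * (\<Sum>j<n. H d j * H j b))"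
    by (subst sum_rotate4) (simp only: sum_mult_sum_mult)
  also have "\<dots> = A a b"
    using a b by (simp add: inv)
  finally show "A a b = (\<Sum>k<n. of_real (lam k) * (\<Sum>i<n. H a i * Y k i) * cnj (\<Sum>i<n. H b i * Y k i))"
    by (simp add: U_def)
qed

lemma hermitian_deflate:
  fixes A :: "nat \<Rightarrow> nat \<Rightarrow> complex"
  assumes herm: "hermitian n A" and "0 < n"
  obtains H e where "hermitian n H"
    and "\<And>a c. a < n \<Longrightarrow> c < n \<Longrightarrow> (\<Sum>b<n. H a b * H b c) = (if a = c then 1 else 0)"
    and "\<And>i. i < n \<Longrightarrow> (\<Sum>a<n. \<Sum>b<n. H i a * A a b * H b 0) = (if i = 0 then of_real e else 0)"
    and "\<And>j. j < n \<Longrightarrow> (\<Sum>a<n. \<Sum>b<n. H 0 a * A a b * H b j) = (if j = 0 then of_real e else 0)"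
proof -
  obtain u r e where unit: "(\<Sum>a<n. cnj (u a) * u a) = 1" and u0: "u 0 = of_real r"
    and eig: "\<And>a. a < n \<Longrightarrow> (\<Sum>b<n. A a b * u b) = e * u a"
    using unit_eigenvector_exists[where n = n and A = A] \<open>0 < n\<close> by blast
  obtain H where H: "hermitian n H"
    and inv: "\<And>a c. a < n \<Longrightarrow> c < n \<Longrightarrow> (\<Sum>b<n. H a b * H b c) = (if a = c then 1 else 0)"
    and H0: "\<And>a. a < n \<Longrightarrow> H a 0 = u a"
    using householder_reflection[OF unit u0 \<open>0 < n\<close>] by blast
  define A' where "A' = (\<lambda>i j. \<Sum>a<n. \<Sum>b<n. H i a * A a b * H b j)"
  have herm': "hermitian n A'"
    unfolding A'_def by (rule hermitian_sandwich[OF herm H])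
  \<comment> \<open>the first column of \<open>H\<close> is an eigenvector, so \<open>A'\<close> deflates\<close>
  have col: "A' i 0 = e * (if i = 0 then 1 else 0)" if "i < n" for i
  proof -
    have "A' i 0 = (\<Sum>a<n. H i a * (\<Sum>b<n. A a b * H b 0))"
      unfolding A'_def by (simp add: sum_distrib_left mult_ac)
    also have "\<dots> = (\<Sum>a<n. H i a * (e * H a 0))"
      by (intro sum.cong refl) (simp add: H0 eig)
    also have "\<dots> = e * (\<Sum>a<n. H i a * H a 0)"
      by (simp add: sum_distrib_left mult_ac)
    finally show ?thesis
      using inv[OF that \<open>0 < n\<close>] by simp
  qed
  have "cnj (A' 0 0) = A' 0 0"
    using hermitian_cnj[OF herm' \<open>0 < n\<close> \<open>0 < n\<close>] .
  then have e: "e = of_real (Re e)"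
    using col[OF \<open>0 < n\<close>] by (simp add: complex_eq_iff)
  have col': "A' i 0 = (if i = 0 then of_real (Re e) else 0)" if "i < n" for i
    using col[OF that] e by simp
  moreover have "A' 0 j = (if j = 0 then of_real (Re e) else 0)" if "j < n" for j
    using hermitian_cnj[OF herm' that \<open>0 < n\<close>] col'[OF that] by (auto split: if_splits)
  ultimately show thesis
    using that[OF H inv] unfolding A'_def by blast
qed

theorem hermitian_eigendecomp:
  "hermitian n A \<Longrightarrow> \<exists>u lam. orthonormal n u \<and> eigendecomp n A u lam"
proof (induction n arbitrary: A)
  case 0
  show ?case by (simp add: orthonormal_def eigendecomp_def)
next
  case (Suc m)
  define n where "n = Suc m"
  obtain H e where H: "hermitian n H"
    and inv: "\<And>a c. a < n \<Longrightarrow> c < n \<Longrightarrow> (\<Sum>b<n. H a b * H b c) = (if a = c then 1 else 0)"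
    and col: "\<And>i. i < n \<Longrightarrow> (\<Sum>a<n. \<Sum>b<n. H i a * A a b * H b 0) = (if i = 0 then of_real e else 0)"
    and row: "\<And>j. j < n \<Longrightarrow> (\<Sum>a<n. \<Sum>b<n. H 0 a * A a b * H b j) = (if j = 0 then of_real e else 0)"
    using hermitian_deflate[OF Suc.prems[folded n_def]] by (auto simp: n_def)
  define A' where "A' = (\<lambda>i j. \<Sum>a<n. \<Sum>b<n. H i a * A a b * H b j)"
  have "hermitian n A'"
    unfolding A'_def by (rule hermitian_sandwich[OF Suc.prems[folded n_def] H])
  then have "hermitian m (\<lambda>i j. A' (Suc i) (Suc j))"
    unfolding hermitian_def n_def by (metis Suc_less_eq)
  then obtain v mu where "orthonormal m v" "eigendecomp m (\<lambda>i j. A' (Suc i) (Suc j)) v mu"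
    using Suc.IH by blast
  from eigendecomp_extend[OF this, of e] col row
  obtain Y lam where "orthonormal n Y" "eigendecomp n A' Y lam"
    unfolding A'_def n_def by blast
  then show ?case
    using orthonormal_conjugate[OF H inv] eigendecomp_conjugate[OF H inv] unfolding A'_def n_def by blast
qed

section \<open>Characteristic polynomial and entropy\<close>

lemma char_poly_eigendecomp:
  fixes P :: "complex mat"
  assumes P: "P \<in> carrier_mat n n" and u: "orthonormal n u"
    and dec: "eigendecomp n (\<lambda>a b. P $$ (a, b)) u lam"
  shows "char_poly P = (\<Prod>k\<leftarrow>[0..<n]. [:- of_real (lam k), 1:])"
proof -
  define U where "U = mat n n (\<lambda>(a, k). u k a)"
  define V where "V = mat n n (\<lambda>(k, a). cnj (u k a))"
  define D where "D = mat n n (\<lambda>(i, j). if i = j then complex_of_real (lam i) else 0)"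
  have "P = U * D * V"
  proof (rule eq_matI)
    fix a b assume "a < dim_row (U * D * V)" and "b < dim_col (U * D * V)"
    then have a: "a < n" and b: "b < n"
      by (simp_all add: U_def V_def)
    have "(U * D) $$ (a, k) = u k a * of_real (lam k)" if "k < n" for k
      using a that by (simp add: U_def D_def scalar_prod_def atLeast0LessThan if_distrib cong: if_cong)
    then have "(U * D * V) $$ (a, b) = (\<Sum>k<n. of_real (lam k) * u k a * cnj (u k b))"
      using a b by (simp add: V_def D_def U_def scalar_prod_def atLeast0LessThan mult_ac)
    also have "\<dots> = P $$ (a, b)"
      using dec a b unfolding eigendecomp_def by simp
    finally show "P $$ (a, b) = (U * D * V) $$ (a, b)" ..
  qed (use P in \<open>simp_all add: U_def V_def\<close>)
  then have "similar_mat_wit P D U V"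
    using P orthonormal_unitary[OF u]
    by (auto simp: similar_mat_wit_def Let_def U_def V_def D_def)
  then have "char_poly P = char_poly D"
    by (intro char_poly_similar) (auto simp: similar_mat_def)
  also have "\<dots> = (\<Prod>a\<leftarrow>diag_mat D. [:- a, 1:])"
    by (rule char_poly_upper_triangular[of _ n]) (auto simp: D_def upper_triangular_def)
  also have "diag_mat D = map (\<lambda>k. complex_of_real (lam k)) [0..<n]"
    by (simp add: diag_mat_def D_def)
  finally show ?thesis
    by (simp add: comp_def)
qed

lemma sum_list_map_eq_sum_count_of_nat:
  fixes f :: "'a \<Rightarrow> 'b::comm_semiring_1"
  shows "sum_list (map f xs) = (\<Sum>x\<in>set xs. of_nat (count_list xs x) * f x)"
proof (induction xs)
  case (Cons y xs)
  have "(\<Sum>x\<in>set (y # xs). of_nat (count_list (y # xs) x) * f x)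
      = (\<Sum>x\<in>insert y (set xs). of_nat (count_list xs x) * f x + (if x = y then f x else 0))"
    by (intro sum.cong) (auto simp: algebra_simps)
  also have "\<dots> = (\<Sum>x\<in>insert y (set xs). of_nat (count_list xs x) * f x) + f y"
    by (simp add: sum.distrib)
  also have "(\<Sum>x\<in>insert y (set xs). of_nat (count_list xs x) * f x) = (\<Sum>x\<in>set xs. of_nat (count_list xs x) * f x)"
    by (cases "y \<in> set xs") (auto simp: sum.insert_if count_list_0_iff)
  finally show ?case
    using Cons.IH by (simp add: add.commute)
qed simp

lemma vn_entropy_eigenvalues:
  fixes P :: "complex mat" and lam :: "nat \<Rightarrow> real"
  assumes "char_poly P = (\<Prod>k\<leftarrow>[0..<n]. [:- of_real (lam k), 1:])"
  shows "vn_entropy P = - (\<Sum>k<n. if lam k = 0 then 0 else lam k * log 2 (lam k))"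
proof -
  define es where "es = map (\<lambda>k. complex_of_real (lam k)) [0..<n]"
  define f where "f = (\<lambda>a::complex. if Re a = 0 then 0 else Re a * log 2 (Re a))"
  have cp: "char_poly P = (\<Prod>e\<leftarrow>es. [:- e, 1:])"
    unfolding assms es_def by (simp add: comp_def)
  have roots: "{a. poly (char_poly P) a = 0} = set es"
    unfolding cp poly_prod_list_zero_iff by auto
  have "order a (char_poly P) = count_list es a" for a
  proof -
    have "order a (char_poly P) = sum_list (map (order a) (map (\<lambda>e. [:- e, 1:]) es))"
      unfolding cp by (rule order_prod_list) auto
    also have "\<dots> = count_list es a"
      by (induction es) (auto simp: order_linear')
    finally show ?thesis .
  qed
  then have "(\<Sum>a\<in>{a. poly (char_poly P) a = 0}. real (order a (char_poly P)) * f a) = sum_list (map f es)"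
    unfolding roots by (simp add: sum_list_map_eq_sum_count_of_nat)
  also have "\<dots> = (\<Sum>k<n. if lam k = 0 then 0 else lam k * log 2 (lam k))"
    unfolding es_def f_def
    by (simp add: comp_def sum_list_distinct_conv_sum_set atLeast0LessThan cong: if_cong)
  finally show ?thesis
    unfolding vn_entropy_def f_def by simp
qed

section \<open>Operators on a bipartite space\<close>

text \<open>A vector of \<open>\<complex>\<^sup>d \<otimes> \<complex>\<^sup>D\<close> is a \<open>d \<times> D\<close> array \<open>x j l\<close>, an operator a four-index array whose
  entry \<open>F j l j' l'\<close> belongs to the basis vectors \<open>|j l\<rangle>\<close> and \<open>|j' l'\<rangle>\<close>. Then \<open>sesq d D F x y\<close> is
  \<open>\<langle>x|F|y\<rangle>\<close>, \<open>gram D X\<close> is the partial trace over \<open>\<complex>\<^sup>D\<close> of \<open>|X\<rangle>\<langle>X|\<close>, and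
  \<open>spectral_apply d u f X\<close> applies \<open>\<Sum>m. f m |u\<^sub>m\<rangle>\<langle>u\<^sub>m|\<close> to the first factor.\<close>

definition sesq ::
    "nat \<Rightarrow> nat \<Rightarrow> (nat \<Rightarrow> nat \<Rightarrow> nat \<Rightarrow> nat \<Rightarrow> complex) \<Rightarrow> (nat \<Rightarrow> nat \<Rightarrow> complex) \<Rightarrow> (nat \<Rightarrow> nat \<Rightarrow> complex) \<Rightarrow> complex" where
  "sesq d D F x y = (\<Sum>j<d. \<Sum>l<D. \<Sum>j'<d. \<Sum>l'<D. cnj (x j l) * F j l j' l' * y j' l')"

definition psd_form :: "nat \<Rightarrow> nat \<Rightarrow> (nat \<Rightarrow> nat \<Rightarrow> nat \<Rightarrow> nat \<Rightarrow> complex) \<Rightarrow> bool" where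
  "psd_form d D F \<longleftrightarrow> (\<forall>x. 0 \<le> Re (sesq d D F x x))"

definition gram :: "nat \<Rightarrow> (nat \<Rightarrow> nat \<Rightarrow> complex) \<Rightarrow> nat \<Rightarrow> nat \<Rightarrow> complex" where
  "gram D X a b = (\<Sum>k<D. X a k * cnj (X b k))"

definition spectral_apply ::
    "nat \<Rightarrow> (nat \<Rightarrow> nat \<Rightarrow> complex) \<Rightarrow> (nat \<Rightarrow> real) \<Rightarrow> (nat \<Rightarrow> nat \<Rightarrow> complex) \<Rightarrow> nat \<Rightarrow> nat \<Rightarrow> complex" where
  "spectral_apply d u f X j k = (\<Sum>j'<d. (\<Sum>m<d. of_real (f m) * u m j * cnj (u m j')) * X j' k)"

lemma sesq_cong:
  assumes "\<And>j l. j < d \<Longrightarrow> l < D \<Longrightarrow> x j l = x' j l"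
    and "\<And>j l. j < d \<Longrightarrow> l < D \<Longrightarrow> y j l = y' j l"
  shows "sesq d D F x y = sesq d D F x' y'"
  unfolding sesq_def using assms by (intro sum.cong refl) auto

lemma sesq_cong_op:
  assumes "\<And>j l j' l'. j < d \<Longrightarrow> l < D \<Longrightarrow> j' < d \<Longrightarrow> l' < D \<Longrightarrow> F j l j' l' = F' j l j' l'"
  shows "sesq d D F x y = sesq d D F' x y"
  unfolding sesq_def using assms by (intro sum.cong refl) auto

lemma sesq_add_self:
  "sesq d D F (\<lambda>j l. x j l + y j l) (\<lambda>j l. x j l + y j l)
     = sesq d D F x x + sesq d D F x y + sesq d D F y x + sesq d D F y y"
proof -
  have "sesq d D F (\<lambda>j l. x j l + y j l) (\<lambda>j l. x j l + y j l)
      = (\<Sum>j<d. \<Sum>l<D. \<Sum>j'<d. \<Sum>l'<D. (cnj (x j l) * F j l j' l' * x j' l' + cnj (x j l) * F j l j' l' * y j' l')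
          + (cnj (y j l) * F j l j' l' * x j' l' + cnj (y j l) * F j l j' l' * y j' l'))"
    unfolding sesq_def by (intro sum.cong refl) (simp add: algebra_simps)
  also have "\<dots> = sesq d D F x x + sesq d D F x y + (sesq d D F y x + sesq d D F y y)"
    unfolding sesq_def by (simp only: sum.distrib)
  finally show ?thesis
    by simp
qed

lemma sesq_scaled_diff_self:
  "sesq d D F (\<lambda>j l. of_real a * x j l - y j l) (\<lambda>j l. of_real a * x j l - y j l)
     = of_real (a * a) * sesq d D F x x - of_real a * sesq d D F x y
       - of_real a * sesq d D F y x + sesq d D F y y"
proof -
  have "sesq d D F (\<lambda>j l. of_real a * x j l - y j l) (\<lambda>j l. of_real a * x j l - y j l)
      = (\<Sum>j<d. \<Sum>l<D. \<Sum>j'<d. \<Sum>l'<D.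
          (of_real (a * a) * (cnj (x j l) * F j l j' l' * x j' l') - of_real a * (cnj (x j l) * F j l j' l' * y j' l'))
          - (of_real a * (cnj (y j l) * F j l j' l' * x j' l') - cnj (y j l) * F j l j' l' * y j' l'))"
    unfolding sesq_def by (intro sum.cong refl) (simp add: algebra_simps)
  also have "\<dots> = of_real (a * a) * sesq d D F x x - of_real a * sesq d D F x y
      - (of_real a * sesq d D F y x - sesq d D F y y)"
    unfolding sesq_def by (simp only: sum_subtractf sum_distrib_left)
  finally show ?thesis
    by simp
qed

lemma sesq_cross_le:
  assumes "psd_form d D F" and "0 < t"
  shows "Re (sesq d D F x y) + Re (sesq d D F y x) \<le> t * Re (sesq d D F x x) + Re (sesq d D F y y) / t"
proof -
  have "0 \<le> Re (sesq d D F (\<lambda>j l. of_real t * x j l - y j l) (\<lambda>j l. of_real t * x j l - y j l))"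
    using assms(1) unfolding psd_form_def by blast
  then have "t * (Re (sesq d D F x y) + Re (sesq d D F y x))
      \<le> t * (t * Re (sesq d D F x x) + Re (sesq d D F y y) / t)"
    using \<open>0 < t\<close> unfolding sesq_scaled_diff_self by (simp add: algebra_simps)
  then show ?thesis
    using \<open>0 < t\<close> by simp
qed

lemma sesq_sum_le:
  assumes "psd_form d D F" and "0 < t"
    and "\<And>j l. j < d \<Longrightarrow> l < D \<Longrightarrow> x j l = y j l + z j l"
  shows "Re (sesq d D F x x) \<le> (1 + t) * Re (sesq d D F y y) + (1 + 1 / t) * Re (sesq d D F z z)"
proof -
  have "sesq d D F x x = sesq d D F (\<lambda>j l. y j l + z j l) (\<lambda>j l. y j l + z j l)"
    by (rule sesq_cong) (simp_all add: assms(3))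
  then show ?thesis
    using sesq_cross_le[OF assms(1,2), of y z] unfolding sesq_add_self by (simp add: algebra_simps)
qed

lemma sesq_single_columns:
  assumes "c < D" and "a < D"
  shows "sesq d D F (\<lambda>j l. if l = a then x j else 0) (\<lambda>j l. if l = c then y j else 0)
       = (\<Sum>j<d. \<Sum>j'<d. cnj (x j) * F j a j' c * y j')"
proof -
  have "sesq d D F (\<lambda>j l. if l = a then x j else 0) (\<lambda>j l. if l = c then y j else 0)
      = (\<Sum>j<d. \<Sum>l<D. \<Sum>j'<d. (if l = a then cnj (x j) else 0) * F j l j' c * y j')"
    unfolding sesq_def using \<open>c < D\<close> by (intro sum.cong refl) (simp add: if_distrib cong: if_cong)
  also have "\<dots> = (\<Sum>j<d. \<Sum>l<D. \<Sum>j'<d. if l = a then cnj (x j) * F j l j' c * y j' else 0)"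
    by (intro sum.cong refl) simp
  also have "\<dots> = (\<Sum>j<d. \<Sum>j'<d. \<Sum>l<D. if l = a then cnj (x j) * F j l j' c * y j' else 0)"
    by (rule sum.cong[OF refl], rule sum.swap)
  also have "\<dots> = (\<Sum>j<d. \<Sum>j'<d. cnj (x j) * F j a j' c * y j')"
    using \<open>a < D\<close> by simp
  finally show ?thesis .
qed

lemma ppt_sesq_le:
  assumes ppt: "psd_form d D (\<lambda>j l j' l'. M j l' j' l)"
  shows "Re (sesq d D M Z Z) \<le> Re (\<Sum>j<d. \<Sum>j'<d. gram D Z j' j * (\<Sum>k<D. M j k j' k))"
proof -
  define N where "N = (\<lambda>j l j' l'. M j l' j' l)"
  define z where "z = (\<lambda>k k' (j::nat) (l::nat). if l = k' then Z j k else 0)"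
  define R where "R = (\<lambda>k k'. Re (sesq d D N (z k k') (z k' k)))"
  define S where "S = (\<lambda>k k'. Re (sesq d D N (z k k') (z k k')))"
  \<comment> \<open>each term of the form is a cross term of the partially transposed operator \<open>N\<close>\<close>
  have "sesq d D M Z Z = (\<Sum>j<d. \<Sum>j'<d. \<Sum>k<D. \<Sum>k'<D. cnj (Z j k) * M j k j' k' * Z j' k')"
    unfolding sesq_def by (rule sum.cong[OF refl]) (rule sum.swap)
  also have "\<dots> = (\<Sum>k<D. \<Sum>k'<D. \<Sum>j<d. \<Sum>j'<d. cnj (Z j k) * M j k j' k' * Z j' k')"
    by (rule sum_rotate4)
  also have "\<dots> = (\<Sum>k<D. \<Sum>k'<D. sesq d D N (z k k') (z k' k))"
    by (intro sum.cong refl) (simp add: z_def sesq_single_columns N_def)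
  finally have L: "Re (sesq d D M Z Z) = (\<Sum>k<D. \<Sum>k'<D. R k k')"
    by (simp add: R_def Re_sum)
  have "2 * (\<Sum>k<D. \<Sum>k'<D. R k k') = (\<Sum>k<D. \<Sum>k'<D. R k k' + R k' k)"
    using sum.swap[of R "{..<D}" "{..<D}"] by (simp add: sum.distrib)
  also have "\<dots> \<le> (\<Sum>k<D. \<Sum>k'<D. S k k' + S k' k)"
    using sesq_cross_le[OF ppt[folded N_def], of 1] unfolding R_def S_def by (intro sum_mono) simp
  also have "\<dots> = 2 * (\<Sum>k<D. \<Sum>k'<D. S k k')"
    using sum.swap[of S "{..<D}" "{..<D}"] by (simp add: sum.distrib)
  finally have "(\<Sum>k<D. \<Sum>k'<D. R k k') \<le> (\<Sum>k<D. \<Sum>k'<D. S k k')"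
    by simp
  also have "(\<Sum>k<D. \<Sum>k'<D. S k k')
      = Re (\<Sum>k<D. \<Sum>k'<D. \<Sum>j<d. \<Sum>j'<d. cnj (Z j k) * M j k' j' k' * Z j' k)"
    unfolding S_def Re_sum by (intro sum.cong refl) (simp add: z_def sesq_single_columns N_def)
  also have "(\<Sum>k<D. \<Sum>k'<D. \<Sum>j<d. \<Sum>j'<d. cnj (Z j k) * M j k' j' k' * Z j' k)
      = (\<Sum>j<d. \<Sum>j'<d. gram D Z j' j * (\<Sum>k<D. M j k j' k))"
    unfolding gram_def sum_product by (subst sum_rotate4) (intro sum.cong refl, simp add: mult_ac)
  finally show ?thesis
    using L by simp
qed

lemma psd_form_ptrace:
  assumes "psd_form d D M"
  shows "0 \<le> Re (\<Sum>j<d. \<Sum>j'<d. cnj (v j) * (\<Sum>k<D. M j k j' k) * v j')"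
proof -
  have "(\<Sum>j<d. \<Sum>j'<d. cnj (v j) * (\<Sum>k<D. M j k j' k) * v j')
      = (\<Sum>j<d. \<Sum>j'<d. \<Sum>k<D. cnj (v j) * M j k j' k * v j')"
    by (intro sum.cong refl) (simp add: sum_distrib_left sum_distrib_right)
  also have "\<dots> = (\<Sum>k<D. sesq d D M (\<lambda>j l. if l = k then v j else 0) (\<lambda>j l. if l = k then v j else 0))"
    by (subst sum_rotate3[symmetric]) (simp add: sesq_single_columns)
  finally show ?thesis
    using assms unfolding psd_form_def by (simp add: Re_sum sum_nonneg)
qed

lemma eigendecomp_trace:
  assumes "orthonormal n u" and "eigendecomp n A u lam"
  shows "(\<Sum>a<n. A a a) = of_real (\<Sum>k<n. lam k)"
proof -
  have "(\<Sum>a<n. A a a) = (\<Sum>k<n. of_real (lam k) * (\<Sum>a<n. cnj (u k a) * u k a))"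
    using assms(2) unfolding eigendecomp_def
    by (simp add: sum_distrib_left mult_ac) (rule sum.swap)
  also have "\<dots> = (\<Sum>k<n. of_real (lam k))"
    using assms(1) unfolding orthonormal_def by simp
  finally show ?thesis
    by simp
qed

lemma spectral_apply_one:
  assumes "orthonormal d u" and "j < d"
  shows "spectral_apply d u (\<lambda>_. 1) X j k = X j k"
proof -
  have "spectral_apply d u (\<lambda>_. 1) X j k = (\<Sum>j'<d. (if j = j' then 1 else 0) * X j' k)"
    unfolding spectral_apply_def using orthonormal_complete[OF assms(1) assms(2)]
    by (intro sum.cong refl) simp
  then show ?thesis
    using assms(2) by simp
qed

lemma spectral_apply_add:
  "spectral_apply d u f X j k + spectral_apply d u g X j k = spectral_apply d u (\<lambda>m. f m + g m) X j k"
proof -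
  have "spectral_apply d u f X j k + spectral_apply d u g X j k
      = (\<Sum>j'<d. (\<Sum>m<d. of_real (f m) * u m j * cnj (u m j')) * X j' k
          + (\<Sum>m<d. of_real (g m) * u m j * cnj (u m j')) * X j' k)"
    unfolding spectral_apply_def by (simp only: sum.distrib)
  also have "\<dots> = spectral_apply d u (\<lambda>m. f m + g m) X j k"
    unfolding spectral_apply_def by (intro sum.cong refl) (simp add: sum.distrib algebra_simps)
  finally show ?thesis .
qed

lemma spectral_apply_gram:
  assumes u: "orthonormal d u" and dec: "eigendecomp d (gram D X) u lam"
  shows "eigendecomp d (gram D (spectral_apply d u f X)) u (\<lambda>l. f l * f l * lam l)"
  unfolding eigendecomp_def
proof (intro allI impI)
  fix j j' assume "j < d" "j' < d"
  define F where "F = (\<lambda>j a. \<Sum>m<d. of_real (f m) * u m j * cnj (u m a))"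
  have F_u: "(\<Sum>a<d. F j a * u l a) = of_real (f l) * u l j" if "l < d" for j l
  proof -
    have "(\<Sum>a<d. F j a * u l a) = (\<Sum>m<d. of_real (f m) * u m j * (\<Sum>a<d. cnj (u m a) * u l a))"
      unfolding F_def by (simp add: sum_distrib_left sum_distrib_right mult_ac) (rule sum.swap)
    also have "\<dots> = of_real (f l) * u l j"
      using u that unfolding orthonormal_def by (simp cong: if_cong)
    finally show ?thesis .
  qed
  have F_X: "spectral_apply d u f X i k = (\<Sum>a<d. F i a * X a k)" for i k
    unfolding spectral_apply_def F_def ..
  have "gram D (spectral_apply d u f X) j j'
      = (\<Sum>k<D. \<Sum>a<d. \<Sum>b<d. F j a * cnj (F j' b) * (X a k * cnj (X b k)))"
    unfolding gram_def F_X cnj_sum sum_product by (intro sum.cong refl) (simp add: mult_ac)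
  also have "\<dots> = (\<Sum>a<d. \<Sum>b<d. F j a * cnj (F j' b) * gram D X a b)"
    unfolding gram_def by (subst sum_rotate3) (simp only: sum_distrib_left)
  also have "\<dots> = (\<Sum>a<d. \<Sum>b<d. \<Sum>l<d. (F j a * u l a) * of_real (lam l) * cnj (F j' b * u l b))"
    using dec unfolding eigendecomp_def
    by (intro sum.cong refl) (simp add: sum_distrib_left mult_ac)
  also have "\<dots> = (\<Sum>l<d. (\<Sum>a<d. F j a * u l a) * of_real (lam l) * (\<Sum>b<d. cnj (F j' b * u l b)))"
    by (subst sum_rotate3, subst sum_rotate3) (intro sum.cong refl, rule sum_mult_sum_mult)
  also have "\<dots> = (\<Sum>l<d. of_real (f l * f l * lam l) * u l j * cnj (u l j'))"
    by (intro sum.cong refl) (simp only: cnj_sum[symmetric] F_u lessThan_iff, simp add: mult_ac)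
  finally show "gram D (spectral_apply d u f X) j j'
      = (\<Sum>l<d. of_real (f l * f l * lam l) * u l j * cnj (u l j'))" .
qed

lemma sqnorm_eq_trace_gram:
  "(\<Sum>j<d. \<Sum>k<D. X j k * cnj (X j k)) = (\<Sum>j<d. gram D X j j)"
  by (simp add: gram_def)

lemma spectral_apply_sqnorm:
  assumes "orthonormal d u" and "eigendecomp d (gram D X) u lam"
  shows "(\<Sum>j<d. \<Sum>k<D. spectral_apply d u f X j k * cnj (spectral_apply d u f X j k))
       = of_real (\<Sum>l<d. f l * f l * lam l)"
  unfolding sqnorm_eq_trace_gram
  by (rule eigendecomp_trace[OF assms(1) spectral_apply_gram[OF assms]])

lemma gram_eigenvalue_nonneg:
  assumes "orthonormal d u" and "eigendecomp d (gram D X) u lam" and "m < d"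
  shows "0 \<le> lam m"
proof -
  define f where "f = (\<lambda>l::nat. if l = m then (1::real) else 0)"
  have "(\<Sum>l<d. f l * f l * lam l) = (\<Sum>l<d. if l = m then lam l else 0)"
    unfolding f_def by (intro sum.cong refl) auto
  then have "lam m = (\<Sum>l<d. f l * f l * lam l)"
    using \<open>m < d\<close> by simp
  also have "\<dots> = Re (\<Sum>j<d. \<Sum>k<D. spectral_apply d u f X j k * cnj (spectral_apply d u f X j k))"
    unfolding spectral_apply_sqnorm[OF assms(1,2)] by simp
  also have "\<dots> \<ge> 0"
    unfolding Re_sum by (intro sum_nonneg) (simp add: complex_mult_cnj)
  finally show ?thesis .
qed

lemma gram_eigenvalue_sum:
  assumes "orthonormal d u" and "eigendecomp d (gram D X) u lam"
    and "(\<Sum>j<d. \<Sum>k<D. X j k * cnj (X j k)) = 1"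
  shows "(\<Sum>m<d. lam m) = 1"
  using eigendecomp_trace[OF assms(1,2)] assms(3) unfolding sqnorm_eq_trace_gram
  by (metis of_real_eq_1_iff)

lemma ppt_sesq_le_trace:
  assumes ppt: "psd_form d D (\<lambda>j l j' l'. M j l' j' l)" and psd: "psd_form d D M"
    and u: "orthonormal d u" and dec: "eigendecomp d (gram D Y) u t"
    and t: "\<And>m. m < d \<Longrightarrow> 0 \<le> t m \<and> t m \<le> c"
  shows "Re (sesq d D M Y Y) \<le> c * Re (\<Sum>j<d. \<Sum>k<D. M j k j k)"
proof -
  define MB where "MB = (\<lambda>j j'. \<Sum>k<D. M j k j' k)"
  define q where "q = (\<lambda>l. \<Sum>j<d. \<Sum>j'<d. cnj (u l j) * MB j j' * u l j')"
  have q: "0 \<le> Re (q l)" for l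
    unfolding q_def MB_def by (rule psd_form_ptrace[OF psd])
  have "Re (sesq d D M Y Y) \<le> Re (\<Sum>j<d. \<Sum>j'<d. gram D Y j' j * MB j j')"
    unfolding MB_def by (rule ppt_sesq_le[OF ppt])
  also have "(\<Sum>j<d. \<Sum>j'<d. gram D Y j' j * MB j j')
      = (\<Sum>j<d. \<Sum>j'<d. \<Sum>l<d. of_real (t l) * (cnj (u l j) * MB j j' * u l j'))"
    using dec unfolding eigendecomp_def
    by (intro sum.cong refl) (simp add: sum_distrib_left sum_distrib_right mult_ac)
  also have "\<dots> = (\<Sum>l<d. of_real (t l) * q l)"
    unfolding q_def by (subst sum_rotate3[symmetric]) (simp only: sum_distrib_left)
  also have "Re \<dots> \<le> (\<Sum>l<d. c * Re (q l))"
    unfolding Re_sum using t q by (intro sum_mono) (simp add: mult_right_mono)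
  also have "\<dots> = c * Re (\<Sum>l<d. q l)"
    by (simp add: sum_distrib_left Re_sum)
  also have "(\<Sum>l<d. q l) = (\<Sum>j<d. \<Sum>j'<d. (\<Sum>l<d. u l j' * cnj (u l j)) * MB j j')"
    unfolding q_def by (subst sum_rotate3) (simp add: sum_distrib_left sum_distrib_right mult_ac)
  also have "\<dots> = (\<Sum>j<d. \<Sum>j'<d. (if j' = j then 1 else 0) * MB j j')"
    using orthonormal_complete[OF u] by (intro sum.cong refl) simp
  also have "\<dots> = (\<Sum>j<d. MB j j)"
    by (intro sum.cong refl) simp
  finally show ?thesis
    by (simp add: MB_def)
qed

section \<open>Clipping the Schmidt coefficients\<close>

text \<open>\<open>clip c x\<close> lowers the weight \<open>x\<close> of a Schmidt coefficient to \<open>min x c\<close>: \<open>(clip c x)\<^sup>2 x = min x c\<close>.\<close>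

definition clip :: "real \<Rightarrow> real \<Rightarrow> real" where
  "clip c x = (if x \<le> c then 1 else sqrt (c / x))"

lemma clip_bounds:
  assumes "0 < c" and "0 \<le> x"
  shows "0 \<le> clip c x" and "clip c x \<le> 1" and "clip c x * clip c x * x \<le> c"
  using assms by (auto simp: clip_def not_le real_sqrt_le_1_iff)

lemma clip_loss_le:
  fixes x c :: real
  assumes "0 \<le> x" and "0 < c"
  shows "(1 - clip c x)\<^sup>2 * x \<le> (if x = 0 then 0 else x * ln x) - x * ln c - x + c"
proof (cases "x \<le> c")
  case True
  show ?thesis
  proof (cases "x = 0")
    case False
    then have "0 < x"
      using assms(1) by simp
    have "ln (c / x) \<le> c / x - 1"
      using \<open>0 < c\<close> \<open>0 < x\<close> by (intro ln_le_minus_one) simp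
    then have "x * (ln c - ln x) \<le> x * (c / x - 1)"
      using \<open>0 < c\<close> \<open>0 < x\<close> by (intro mult_left_mono) (auto simp: ln_div)
    then show ?thesis
      using True False \<open>0 < x\<close> by (simp add: clip_def algebra_simps)
  qed (use assms in \<open>simp add: clip_def\<close>)
next
  case False
  then have "0 < x"
    using assms(2) by simp
  define y where "y = sqrt (x / c)"
  have "0 < y" and y2: "y * y = x / c"
    using \<open>0 < x\<close> \<open>0 < c\<close> by (simp_all add: y_def)
  have "clip c x = 1 / y"
    using False \<open>0 < x\<close> \<open>0 < c\<close> by (simp add: clip_def y_def real_sqrt_divide)
  have "ln (1 / y) \<le> 1 / y - 1"
    using \<open>0 < y\<close> by (intro ln_le_minus_one) simp
  then have ly: "1 - 1 / y \<le> ln y"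
    using \<open>0 < y\<close> by (simp add: ln_div)
  have "ln x - ln c = ln (y * y)"
    using \<open>0 < x\<close> \<open>0 < c\<close> y2 by (simp add: ln_div)
  also have "\<dots> = 2 * ln y"
    using \<open>0 < y\<close> by (simp add: ln_mult)
  finally have "ln x - ln c = 2 * ln y" .
  moreover have "(1 - 1 / y)\<^sup>2 * x = x - 2 * (x / y) + c"
    using \<open>0 < y\<close> \<open>0 < c\<close> y2 by (simp add: power2_eq_square field_simps)
  moreover have "x * (1 - 1 / y) \<le> x * ln y"
    using ly \<open>0 < x\<close> by simp
  ultimately show ?thesis
    using \<open>0 < x\<close> \<open>clip c x = 1 / y\<close> by (simp add: algebra_simps)
qed

lemma clip_loss_le_entropy_defect:
  fixes lam :: "nat \<Rightarrow> real"
  assumes "0 < d" and nonneg: "\<And>m. m < d \<Longrightarrow> 0 \<le> lam m" and sum1: "(\<Sum>m<d. lam m) = 1"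
    and ent: "log 2 d - \<delta> \<le> - (\<Sum>m<d. if lam m = 0 then 0 else lam m * log 2 (lam m))"
  shows "(\<Sum>m<d. (1 - clip (1 / d) (lam m))\<^sup>2 * lam m) \<le> \<delta> * ln 2"
proof -
  define xlnx where "xlnx = (\<lambda>x::real. if x = 0 then 0 else x * ln x)"
  have "(\<Sum>m<d. (1 - clip (1 / d) (lam m))\<^sup>2 * lam m)
      \<le> (\<Sum>m<d. xlnx (lam m) - lam m * ln (1 / d) - lam m + 1 / d)"
    unfolding xlnx_def using \<open>0 < d\<close> nonneg by (intro sum_mono clip_loss_le) auto
  also have "\<dots> = (\<Sum>m<d. xlnx (lam m)) + ln d"
    using sum1 \<open>0 < d\<close> by (simp add: sum.distrib sum_subtractf ln_div flip: sum_distrib_right)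
  also have "(\<Sum>m<d. xlnx (lam m)) = ln 2 * (\<Sum>m<d. if lam m = 0 then 0 else lam m * log 2 (lam m))"
    unfolding xlnx_def sum_distrib_left by (intro sum.cong refl) (simp add: log_def)
  also have "\<dots> \<le> ln 2 * (\<delta> - log 2 d)"
    using ent by (intro mult_left_mono) auto
  also have "ln 2 * (\<delta> - log 2 d) + ln d = \<delta> * ln 2"
    by (simp add: log_def algebra_simps)
  finally show ?thesis
    by simp
qed

lemma le_of_bound_for_all_t:
  fixes B b a q :: real
  assumes bound: "\<And>t. 0 < t \<Longrightarrow> B \<le> b + t * a + q + q / t" and "a + q \<le> 1" and "0 \<le> q"
  shows "B \<le> b + 2 * sqrt q + q - sqrt q ^ 3"
proof (cases "q = 0")
  case True
  have "B \<le> b + e" if "0 < e" for e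
  proof -
    have "e * a \<le> e"
      using \<open>a + q \<le> 1\<close> True that by (simp add: mult_left_le)
    then show ?thesis
      using bound[OF that] True by simp
  qed
  then show ?thesis
    using True by (simp add: field_le_epsilon)
next
  case False
  define r where "r = sqrt q"
  have "0 < r" and "r * r = q"
    using False \<open>0 \<le> q\<close> by (simp_all add: r_def)
  have "B \<le> b + r * a + q + q / r"
    using bound[OF \<open>0 < r\<close>] .
  also have "r * a \<le> r * (1 - q)"
    using \<open>a + q \<le> 1\<close> \<open>0 < r\<close> by simp
  also have "q / r = r"
    using \<open>0 < r\<close> \<open>r * r = q\<close> by auto
  finally show ?thesis
    using \<open>r * r = q\<close> by (simp add: r_def power3_eq_cube algebra_simps)
qed

lemma ln2_le: "ln (2::real) \<le> 64 / 81"
proof -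
  have "ln (2::real) \<le> ln ((119 / 100) ^ 4)"
    by (subst ln_le_cancel_iff) (simp_all add: power4_eq_xxxx)
  also have "\<dots> = 4 * ln (119 / 100 :: real)"
    by (simp add: ln_realpow)
  also have "ln (119 / 100 :: real) \<le> 119 / 100 - 1"
    by (rule ln_le_minus_one) simp
  finally show ?thesis
    by simp
qed

lemma cubic_le_sqrt2_root4:
  fixes \<delta> r :: real
  assumes "0 \<le> \<delta>" and "sqrt 2 * \<delta> powr (1/4) \<le> 1" and "0 \<le> r" and "r\<^sup>2 \<le> \<delta> * ln 2"
  shows "2 * r + r\<^sup>2 - r ^ 3 \<le> sqrt 2 * \<delta> powr (1/4)"
proof -
  define \<rho> where "\<rho> = \<delta> powr (1/4)"
  have "0 \<le> \<rho>"
    by (simp add: \<rho>_def)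
  have "\<rho> ^ 4 = \<delta>"
  proof (cases "\<delta> = 0")
    case False
    then have "\<rho> ^ 4 = \<delta> powr (of_nat 4 * (1/4))"
      unfolding \<rho>_def by (rule powr_power)
    then show ?thesis
      using \<open>0 \<le> \<delta>\<close> by simp
  qed (simp add: \<rho>_def)
  \<comment> \<open>\<open>ln 2 \<le> (8/9)\<^sup>2\<close> gives \<open>r \<le> 8/9 \<rho>\<^sup>2\<close>, and \<open>2 + r - r\<^sup>2 \<le> 9/4\<close>\<close>
  have "r\<^sup>2 \<le> \<delta> * (64/81)"
    using \<open>r\<^sup>2 \<le> \<delta> * ln 2\<close> mult_left_mono[OF ln2_le \<open>0 \<le> \<delta>\<close>] by linarith
  also have "\<delta> * (64/81) = ((8/9) * \<rho>\<^sup>2)\<^sup>2"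
    unfolding \<open>\<rho> ^ 4 = \<delta>\<close>[symmetric] by (simp add: power4_eq_xxxx power2_eq_square)
  finally have "r \<le> (8/9) * \<rho>\<^sup>2"
    by (rule power2_le_imp_le) simp
  have "2 * r + r\<^sup>2 - r ^ 3 = r * (2 + r - r\<^sup>2)"
    by (simp add: algebra_simps power2_eq_square power3_eq_cube)
  also have "\<dots> \<le> r * (9/4)"
  proof (rule mult_left_mono)
    have "0 \<le> (r - 1/2)\<^sup>2"
      by simp
    then show "2 + r - r\<^sup>2 \<le> 9/4"
      by (simp add: power2_eq_square algebra_simps)
  qed (rule \<open>0 \<le> r\<close>)
  also have "\<dots> \<le> 2 * \<rho>\<^sup>2"
    using \<open>r \<le> (8/9) * \<rho>\<^sup>2\<close> by simp
  also have "2 * \<rho>\<^sup>2 = (sqrt 2 * \<rho>) * (sqrt 2 * \<rho>)"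
    by (simp add: power2_eq_square algebra_simps)
  also have "\<dots> \<le> sqrt 2 * \<rho>"
    using assms(2) \<open>0 \<le> \<rho>\<close> unfolding \<rho>_def by (simp add: mult_left_le_one_le)
  finally show ?thesis
    by (simp add: \<rho>_def)
qed

lemma clip_weights_sum_le:
  assumes "0 < c" and "\<And>m. m < d \<Longrightarrow> 0 \<le> lam m"
  shows "(\<Sum>m<d. clip c (lam m) * clip c (lam m) * lam m)
       + (\<Sum>m<d. (1 - clip c (lam m)) * (1 - clip c (lam m)) * lam m) \<le> (\<Sum>m<d. lam m)"
  unfolding sum.distrib[symmetric]
proof (rule sum_mono)
  fix m assume "m \<in> {..<d}"
  then have "0 \<le> lam m" and "clip c (lam m) * clip c (lam m) \<le> clip c (lam m)"
    using assms clip_bounds[OF \<open>0 < c\<close>, of "lam m"] by (simp_all add: mult_left_le)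
  then have "lam m * (clip c (lam m) * clip c (lam m)) \<le> lam m * clip c (lam m)"
    by (simp add: mult_left_mono)
  then show "clip c (lam m) * clip c (lam m) * lam m
      + (1 - clip c (lam m)) * (1 - clip c (lam m)) * lam m \<le> lam m"
    by (simp add: algebra_simps)
qed

lemma ppt_overlap_clip_bound:
  fixes M :: "nat \<Rightarrow> nat \<Rightarrow> nat \<Rightarrow> nat \<Rightarrow> complex" and X :: "nat \<Rightarrow> nat \<Rightarrow> complex"
  assumes "0 < d"
    and ppt: "psd_form d D (\<lambda>j l j' l'. M j l' j' l)" and psd: "psd_form d D M"
    and le_id: "\<And>x. Re (sesq d D M x x) \<le> Re (\<Sum>j<d. \<Sum>k<D. x j k * cnj (x j k))"
    and u: "orthonormal d u" and dec: "eigendecomp d (gram D X) u lam"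
    and unit: "(\<Sum>j<d. \<Sum>k<D. X j k * cnj (X j k)) = 1"
  defines "q \<equiv> \<Sum>m<d. (1 - clip (1 / d) (lam m)) * (1 - clip (1 / d) (lam m)) * lam m"
  shows "Re (sesq d D M X X) \<le> Re (\<Sum>j<d. \<Sum>k<D. M j k j k) / d + 2 * sqrt q + q - sqrt q ^ 3"
proof -
  \<comment> \<open>split \<open>X\<close> into a part whose reduced state has eigenvalues at most \<open>1/d\<close>, and a small rest\<close>
  define s where "s = (\<lambda>m. clip (1 / d) (lam m))"
  define X1 where "X1 = spectral_apply d u s X"
  define X2 where "X2 = spectral_apply d u (\<lambda>m. 1 - s m) X"
  define a where "a = (\<Sum>m<d. s m * s m * lam m)"
  define trM where "trM = Re (\<Sum>j<d. \<Sum>k<D. M j k j k)"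
  have lam: "0 \<le> lam m" if "m < d" for m
    using gram_eigenvalue_nonneg[OF u dec that] .
  have split: "X j k = X1 j k + X2 j k" if "j < d" for j k
    using spectral_apply_add[of d u s X j k "\<lambda>m. 1 - s m"] spectral_apply_one[OF u that, of X k]
    unfolding X1_def X2_def by simp
  have X1_tr: "Re (sesq d D M X1 X1) \<le> 1 / d * trM"
    unfolding X1_def trM_def s_def using clip_bounds[of "1 / d"] lam \<open>0 < d\<close>
    by (intro ppt_sesq_le_trace[OF ppt psd u spectral_apply_gram[OF u dec]]) simp
  have X1_a: "Re (sesq d D M X1 X1) \<le> a"
    using le_id[of X1] unfolding X1_def a_def spectral_apply_sqnorm[OF u dec] by simp
  have X2_q: "Re (sesq d D M X2 X2) \<le> q"
    using le_id[of X2] unfolding X2_def q_def s_def spectral_apply_sqnorm[OF u dec] by simp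
  have "Re (sesq d D M X X) \<le> trM / d + t * a + q + q / t" if "0 < t" for t
  proof -
    have "Re (sesq d D M X X)
        \<le> (1 + t) * Re (sesq d D M X1 X1) + (1 + 1 / t) * Re (sesq d D M X2 X2)"
      using split by (intro sesq_sum_le[OF psd that])
    also have "(1 + t) * Re (sesq d D M X1 X1) \<le> trM / d + t * a"
      using X1_tr mult_left_mono[OF X1_a less_imp_le[OF that]] by (simp add: distrib_right)
    also have "(1 + 1 / t) * Re (sesq d D M X2 X2) \<le> (1 + 1 / t) * q"
      using X2_q that by (intro mult_left_mono) auto
    finally show ?thesis
      by (simp add: distrib_right)
  qed
  moreover have "a + q \<le> 1"
    using clip_weights_sum_le[of "1 / d" d lam] lam \<open>0 < d\<close> gram_eigenvalue_sum[OF u dec unit]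
    unfolding a_def q_def s_def by simp
  moreover have "0 \<le> q"
    unfolding q_def using lam by (intro sum_nonneg) simp
  ultimately show ?thesis
    unfolding trM_def by (rule le_of_bound_for_all_t)
qed

lemma ppt_overlap_bound:
  fixes M :: "nat \<Rightarrow> nat \<Rightarrow> nat \<Rightarrow> nat \<Rightarrow> complex" and X :: "nat \<Rightarrow> nat \<Rightarrow> complex" and \<delta> :: real
  assumes "0 < d"
    and ppt: "psd_form d D (\<lambda>j l j' l'. M j l' j' l)" and psd: "psd_form d D M"
    and le_id: "\<And>x. Re (sesq d D M x x) \<le> Re (\<Sum>j<d. \<Sum>k<D. x j k * cnj (x j k))"
    and u: "orthonormal d u" and dec: "eigendecomp d (gram D X) u lam"
    and unit: "(\<Sum>j<d. \<Sum>k<D. X j k * cnj (X j k)) = 1"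
    and ent: "log 2 d - \<delta> \<le> - (\<Sum>m<d. if lam m = 0 then 0 else lam m * log 2 (lam m))"
    and "0 \<le> \<delta>" and "sqrt 2 * \<delta> powr (1/4) \<le> 1"
  shows "Re (sesq d D M X X) \<le> Re (\<Sum>j<d. \<Sum>k<D. M j k j k) / d + sqrt 2 * \<delta> powr (1/4)"
proof -
  define q where "q = (\<Sum>m<d. (1 - clip (1 / d) (lam m)) * (1 - clip (1 / d) (lam m)) * lam m)"
  have lam: "0 \<le> lam m" if "m < d" for m
    using gram_eigenvalue_nonneg[OF u dec that] .
  have "0 \<le> q"
    unfolding q_def using lam by (intro sum_nonneg) simp
  have "q \<le> \<delta> * ln 2"
    using clip_loss_le_entropy_defect[OF \<open>0 < d\<close> lam gram_eigenvalue_sum[OF u dec unit] ent]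
    unfolding q_def by (simp add: power2_eq_square)
  then have "2 * sqrt q + (sqrt q)\<^sup>2 - sqrt q ^ 3 \<le> sqrt 2 * \<delta> powr (1/4)"
    using \<open>0 \<le> q\<close> assms(9,10) by (intro cubic_le_sqrt2_root4) auto
  then show ?thesis
    using ppt_overlap_clip_bound[OF assms(1-7)] \<open>0 \<le> q\<close> unfolding q_def by simp
qed

section \<open>Matrices, POVMs and the main theorem\<close>

lemma psd_quadratic_form_nonneg:
  assumes "psd n A"
  shows "0 \<le> Re (\<Sum>a<n. \<Sum>b<n. cnj (z a) * A $$ (a, b) * z b)"
proof -
  have "vec n z \<in> carrier_vec n"
    by simp
  then have "0 \<le> Re (\<Sum>a<n. \<Sum>b<n. cnj (vec n z $ a) * A $$ (a, b) * vec n z $ b)"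
    using assms unfolding psd_def Let_def by blast
  then show ?thesis
    by simp
qed

lemma quadratic_form_eq_sesq:
  "(\<Sum>a<d * D. \<Sum>b<d * D. cnj (g a) * A a b * g b)
     = sesq d D (\<lambda>j l j' l'. A (j * D + l) (j' * D + l')) (\<lambda>j k. g (j * D + k)) (\<lambda>j k. g (j * D + k))"
  unfolding sesq_def sum_lessThan_mult ..

lemma sesq_eq_quadratic_form:
  "sesq d D (\<lambda>j l j' l'. A (j * D + l) (j' * D + l')) x x
     = (\<Sum>a<d * D. \<Sum>b<d * D. cnj (x (a div D) (a mod D)) * A a b * x (b div D) (b mod D))"
  unfolding quadratic_form_eq_sesq by (rule sesq_cong) simp_all

lemma psd_form_of_psd:
  assumes "psd (d * D) A"
  shows "psd_form d D (\<lambda>j l j' l'. A $$ (j * D + l, j' * D + l'))"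
  unfolding psd_form_def sesq_eq_quadratic_form[of d D "\<lambda>a b. A $$ (a, b)"]
  by (intro allI) (rule psd_quadratic_form_nonneg[OF assms])

lemma psd_form_of_PPT:
  assumes "PPT d D A"
  shows "psd_form d D (\<lambda>j l j' l'. A $$ (j * D + l', j' * D + l))"
proof -
  have "sesq d D (\<lambda>j l j' l'. ptranspose d D A $$ (j * D + l, j' * D + l')) x x
      = sesq d D (\<lambda>j l j' l'. A $$ (j * D + l', j' * D + l)) x x" for x
    by (rule sesq_cong_op) (simp add: ptranspose_def prod_idx_def index_mult_add_less)
  then show ?thesis
    using psd_form_of_psd[of d D "ptranspose d D A"] assms unfolding PPT_def psd_form_def by simp
qed

lemma mtrace_proj_mult:
  assumes "v \<in> carrier_vec n" and "A \<in> carrier_mat n n"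
  shows "mtrace (proj v * A) = (\<Sum>a<n. \<Sum>b<n. cnj (v $ a) * A $$ (a, b) * v $ b)"
proof -
  have "mtrace (proj v * A) = (\<Sum>b<n. \<Sum>a<n. v $ b * cnj (v $ a) * A $$ (a, b))"
    unfolding mtrace_def using assms
    by (intro sum.cong) (auto simp: proj_def scalar_prod_def atLeast0LessThan)
  also have "\<dots> = (\<Sum>a<n. \<Sum>b<n. cnj (v $ a) * A $$ (a, b) * v $ b)"
    by (subst sum.swap) (simp add: mult_ac)
  finally show ?thesis .
qed

lemma ptrace_C_proj:
  assumes "v \<in> carrier_vec (d * D)" and "j < d" and "j' < d"
  shows "ptrace_C d D (proj v) $$ (j, j') = gram D (\<lambda>j k. v $ (j * D + k)) j j'"
  using assms by (simp add: ptrace_C_def proj_def prod_idx_def gram_def index_mult_add_less)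

lemma ent_eigendecomp:
  assumes v: "v \<in> carrier_vec (d * D)"
  obtains u lam where "orthonormal d u" and "eigendecomp d (gram D (\<lambda>j k. v $ (j * D + k))) u lam"
    and "ent d D v = - (\<Sum>m<d. if lam m = 0 then 0 else lam m * log 2 (lam m))"
proof -
  define P where "P = ptrace_C d D (proj v)"
  have P: "P $$ (a, b) = gram D (\<lambda>j k. v $ (j * D + k)) a b" if "a < d" "b < d" for a b
    unfolding P_def using v that by (rule ptrace_C_proj)
  have "hermitian d (\<lambda>a b. P $$ (a, b))"
    unfolding hermitian_def by (simp add: P gram_def cnj_sum mult.commute)
  then obtain u lam where u: "orthonormal d u" and dec: "eigendecomp d (\<lambda>a b. P $$ (a, b)) u lam"
    using hermitian_eigendecomp by blast
  have "P \<in> carrier_mat d d"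
    by (simp add: P_def ptrace_C_def)
  from vn_entropy_eigenvalues[OF char_poly_eigendecomp[OF this u dec]]
  have "ent d D v = - (\<Sum>m<d. if lam m = 0 then 0 else lam m * log 2 (lam m))"
    unfolding ent_def P_def .
  moreover have "eigendecomp d (gram D (\<lambda>j k. v $ (j * D + k))) u lam"
    using dec unfolding eigendecomp_def by (simp add: P)
  ultimately show thesis
    using that u by blast
qed

lemma unit_vec_state_sqnorm:
  assumes "unit_vec_state (d * D) v"
  shows "(\<Sum>j<d. \<Sum>k<D. v $ (j * D + k) * cnj (v $ (j * D + k))) = 1"
proof -
  have "(\<Sum>j<d. \<Sum>k<D. v $ (j * D + k) * cnj (v $ (j * D + k))) = (\<Sum>a<d * D. v $ a * cnj (v $ a))"
    unfolding sum_lessThan_mult ..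
  also have "\<dots> = of_real (\<Sum>a<d * D. (cmod (v $ a))\<^sup>2)"
    unfolding of_real_sum by (intro sum.cong refl) (rule complex_norm_square[symmetric])
  finally show ?thesis
    using assms unfolding unit_vec_state_def by simp
qed

lemma sesq_le_sqnorm:
  assumes "\<And>z. Re (\<Sum>a<d * D. \<Sum>b<d * D. cnj (z a) * A $$ (a, b) * z b) \<le> Re (\<Sum>a<d * D. cnj (z a) * z a)"
  shows "Re (sesq d D (\<lambda>j l j' l'. A $$ (j * D + l, j' * D + l')) x x)
      \<le> Re (\<Sum>j<d. \<Sum>k<D. x j k * cnj (x j k))"
proof -
  have "Re (sesq d D (\<lambda>j l j' l'. A $$ (j * D + l, j' * D + l')) x x)
      \<le> Re (\<Sum>a<d * D. cnj (x (a div D) (a mod D)) * x (a div D) (a mod D))"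
    using assms[of "\<lambda>a. x (a div D) (a mod D)"]
    unfolding sesq_eq_quadratic_form[of d D "\<lambda>a b. A $$ (a, b)"] .
  also have "(\<Sum>a<d * D. cnj (x (a div D) (a mod D)) * x (a div D) (a mod D))
      = (\<Sum>j<d. \<Sum>k<D. x j k * cnj (x j k))"
    unfolding sum_lessThan_mult by (simp add: mult.commute)
  finally show ?thesis .
qed

lemma ppt_pure_state_bound:
  fixes v :: "complex vec" and A :: "complex mat" and \<delta> :: real
  assumes "0 < d" and v: "unit_vec_state (d * D) v" and ent: "log 2 d - \<delta> \<le> ent d D v"
    and psd: "psd (d * D) A" and ppt: "PPT d D A"
    and le_id: "\<And>z. Re (\<Sum>a<d * D. \<Sum>b<d * D. cnj (z a) * A $$ (a, b) * z b) \<le> Re (\<Sum>a<d * D. cnj (z a) * z a)"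
    and "0 \<le> \<delta>" and "sqrt 2 * \<delta> powr (1/4) \<le> 1"
  shows "Re (mtrace (proj v * A)) \<le> Re (mtrace A) / d + sqrt 2 * \<delta> powr (1/4)"
proof -
  define X where "X = (\<lambda>j k. v $ (j * D + k))"
  define M where "M = (\<lambda>j l j' l'. A $$ (j * D + l, j' * D + l'))"
  have vc: "v \<in> carrier_vec (d * D)"
    using v unfolding unit_vec_state_def by auto
  have Ac: "A \<in> carrier_mat (d * D) (d * D)"
    using psd unfolding psd_def by auto
  obtain u lam where u: "orthonormal d u" and dec: "eigendecomp d (gram D X) u lam"
    and "ent d D v = - (\<Sum>m<d. if lam m = 0 then 0 else lam m * log 2 (lam m))"
    using ent_eigendecomp[OF vc] unfolding X_def by blast
  with ent have "Re (sesq d D M X X) \<le> Re (\<Sum>j<d. \<Sum>k<D. M j k j k) / d + sqrt 2 * \<delta> powr (1/4)"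
    using ppt_overlap_bound[OF \<open>0 < d\<close> _ _ sesq_le_sqnorm[OF le_id] u dec] psd_form_of_PPT[OF ppt]
      psd_form_of_psd[OF psd] unit_vec_state_sqnorm[OF v] assms(7,8)
    unfolding M_def X_def by simp
  moreover have "mtrace (proj v * A) = sesq d D M X X"
    unfolding mtrace_proj_mult[OF vc Ac] quadratic_form_eq_sesq M_def X_def ..
  moreover have "mtrace A = (\<Sum>j<d. \<Sum>k<D. M j k j k)"
    using Ac unfolding mtrace_def M_def by (simp add: sum_lessThan_mult)
  ultimately show ?thesis
    by simp
qed

lemma povm_element_le_id:
  assumes "POVM n N M" and "i < N"
  shows "Re (\<Sum>a<n. \<Sum>b<n. cnj (z a) * M i $$ (a, b) * z b) \<le> Re (\<Sum>a<n. cnj (z a) * z a)"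
proof -
  have Msum: "(\<Sum>i<N. M i $$ (a, b)) = (if a = b then 1 else 0)" if "a < n" "b < n" for a b
    using assms(1) that unfolding POVM_def by blast
  define Q where "Q = (\<lambda>i. Re (\<Sum>a<n. \<Sum>b<n. cnj (z a) * M i $$ (a, b) * z b))"
  have "(\<Sum>i<N. \<Sum>a<n. \<Sum>b<n. cnj (z a) * M i $$ (a, b) * z b)
      = (\<Sum>a<n. \<Sum>b<n. cnj (z a) * (\<Sum>i<N. M i $$ (a, b)) * z b)"
    by (subst sum_rotate3) (simp add: sum_distrib_left sum_distrib_right)
  also have "\<dots> = (\<Sum>a<n. \<Sum>b<n. cnj (z a) * z b * (if a = b then 1 else 0))"
    by (intro sum.cong refl) (simp add: Msum mult_ac)
  also have "\<dots> = (\<Sum>a<n. cnj (z a) * z a)"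
    by (intro sum.cong refl) simp
  finally have "(\<Sum>i<N. Q i) = Re (\<Sum>a<n. cnj (z a) * z a)"
    unfolding Q_def by (simp only: Re_sum[symmetric])
  moreover have "Q i \<le> (\<Sum>i<N. Q i)"
    using assms psd_quadratic_form_nonneg unfolding POVM_def Q_def by (intro member_le_sum) auto
  ultimately show ?thesis
    by (simp add: Q_def)
qed

lemma povm_trace_sum:
  assumes "POVM n N M"
  shows "(\<Sum>i<N. Re (mtrace (M i))) = n"
proof -
  have "dim_row (M i) = n" if "i < N" for i
    using assms that unfolding POVM_def psd_def by auto
  then have "(\<Sum>i<N. mtrace (M i)) = (\<Sum>i<N. \<Sum>a<n. M i $$ (a, a))"
    unfolding mtrace_def by (intro sum.cong) auto
  also have "\<dots> = (\<Sum>a<n. \<Sum>i<N. M i $$ (a, a))"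
    by (rule sum.swap)
  also have "\<dots> = of_nat n"
    using assms unfolding POVM_def by simp
  finally show ?thesis
    by (metis Re_complex_of_real Re_sum of_real_of_nat_eq)
qed

lemma povm_overlap_le_one:
  assumes "POVM n N M" and "i < N" and "unit_vec_state n v"
  shows "Re (mtrace (proj v * M i)) \<le> 1"
proof -
  have "v \<in> carrier_vec n" and unit: "(\<Sum>a<n. (cmod (v $ a))\<^sup>2) = 1"
    using assms(3) unfolding unit_vec_state_def by auto
  moreover have "M i \<in> carrier_mat n n"
    using assms(1,2) unfolding POVM_def psd_def by auto
  ultimately have "Re (mtrace (proj v * M i)) \<le> Re (\<Sum>a<n. cnj (v $ a) * v $ a)"
    using povm_element_le_id[OF assms(1,2)] by (simp add: mtrace_proj_mult)
  also have "\<dots> = 1"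
    using unit by (simp add: Re_sum complex_mult_cnj cmod_def power2_eq_square)
  finally show ?thesis .
qed

theorem mainTheorem5:
  fixes dB dC N :: nat and \<phi> M :: "nat \<Rightarrow> _" and \<delta> \<epsilon> :: real
  assumes "0 < dB" and "dB \<le> dC"
    and "\<And>i. i < N \<Longrightarrow> unit_vec_state (dB*dC) (\<phi> i)"
    and "\<delta> \<ge> 0"
    and "\<And>i. i < N \<Longrightarrow> ent dB dC (\<phi> i) \<ge> log 2 (real dB) - \<delta>"
    and "POVM (dB*dC) N M"
    and "\<And>i. i < N \<Longrightarrow> PPT dB dC (M i)"
    and "\<And>i. i < N \<Longrightarrow> Re (mtrace (proj (\<phi> i) * M i)) \<ge> 1 - \<epsilon>"
    and "\<epsilon> + sqrt 2 * \<delta> powr (1/4) < 1"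
  shows "real N \<le> real dC / (1 - \<epsilon> - sqrt 2 * \<delta> powr (1/4))"
proof (cases "N = 0")
  case False
  define \<eta> where "\<eta> = sqrt 2 * \<delta> powr (1/4)"
  have "1 - \<epsilon> \<le> 1"
    using assms(8)[of 0] povm_overlap_le_one[OF assms(6) _ assms(3)] False by fastforce
  then have "\<eta> \<le> 1"
    using assms(9) by (simp add: \<eta>_def)
  have "1 - \<epsilon> \<le> Re (mtrace (M i)) / dB + \<eta>" if "i < N" for i
  proof -
    have "psd (dB * dC) (M i)"
      using assms(6) that unfolding POVM_def by blast
    from ppt_pure_state_bound[OF assms(1) assms(3)[OF that] assms(5)[OF that] this assms(7)[OF that]
        povm_element_le_id[OF assms(6) that] assms(4) \<open>\<eta> \<le> 1\<close>[unfolded \<eta>_def]]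
    show ?thesis
      using assms(8)[OF that] unfolding \<eta>_def by linarith
  qed
  then have "real N * (1 - \<epsilon>) \<le> (\<Sum>i<N. Re (mtrace (M i)) / dB + \<eta>)"
    using sum_mono[of "{..<N}" "\<lambda>_. 1 - \<epsilon>"] by simp
  also have "\<dots> = real dC + real N * \<eta>"
    using povm_trace_sum[OF assms(6)] \<open>0 < dB\<close> by (simp add: sum.distrib flip: sum_divide_distrib)
  finally show ?thesis
    using assms(9) by (simp add: \<eta>_def field_simps)
qed (use assms(9) in simp)

end
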